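(* We have $\Theta\pi(U)\Theta=\pi'(U)$ and $\Theta\pi(a(\mathbb{K}))\Theta=\pi'(a(-\mathbb{K}))$ for every $a\in c(\mathbb{Z})$. Consequently there is an anti-homomorphism $\theta:A\to A$ (with $\theta(U)=U$ and $\theta(a(\mathbb{K}))=a(-\mathbb{K})$) such that $\Theta\pi(a)\Theta=\pi'(\theta(a))$ for all $a\in A$.
   Context: Let $\{E_k\}$ be the canonical basis of $\ell^2(\mathbb{Z})$, $UE_k=E_{k+1}$, $\mathbb{K}E_k=kE_k$, $a(\mathbb{K})E_k=a(k)E_k$. $c(\mathbb{Z})$ is the set of $a:\mathbb{Z}\to\mathbb{C}$ with finite limits at $+\infty$ and at $-\infty$. $A$ is the C$^*$-algebra generated by $U$ and all $a(\mathbb{K})$, $a\in c(\mathbb{Z})$. $\mathcal{H}$ is the Hilbert space of Hilbert–Schmidt operators on $\ell^2(\mathbb{Z})$ with $\langle f,g\rangle=\mathrm{tr}(f^*g)$, each $f$ written uniquely $f=\sum_nU^nf_n(\mathbb{K})$. For $a\in A$, $\pi(a)f=af$ and $\pi'(a)f=fa$ (operator products). $\Theta f=\sum_nU^nf_n(-\mathbb{K}-n)$. *)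

theory Defs
  imports "HOL-Analysis.Analysis"
begin

text \<open>Operators on l2(Z) are represented by their matrices with respect to the
canonical basis E_k: an operator T corresponds to M with M i j = <E_i, T E_j>.\<close>

type_synonym mat = "int \<Rightarrow> int \<Rightarrow> complex"

definition mat_mult :: "mat \<Rightarrow> mat \<Rightarrow> mat" where
  "mat_mult M N = (\<lambda>i j. \<Sum>\<^sub>\<infinity>k. M i k * N k j)"

definition mat_add :: "mat \<Rightarrow> mat \<Rightarrow> mat" where
  "mat_add M N = (\<lambda>i j. M i j + N i j)"

definition mat_diff :: "mat \<Rightarrow> mat \<Rightarrow> mat" where
  "mat_diff M N = (\<lambda>i j. M i j - N i j)"

definition mat_scale :: "complex \<Rightarrow> mat \<Rightarrow> mat" where
  "mat_scale c M = (\<lambda>i j. c * M i j)"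

definition mat_adj :: "mat \<Rightarrow> mat" where
  "mat_adj M = (\<lambda>i j. cnj (M j i))"

definition form_vals :: "mat \<Rightarrow> real set" where
  "form_vals M = {cmod (\<Sum>i\<in>F. \<Sum>j\<in>F. cnj (y i) * M i j * x j) | F x y.
      finite F \<and> (\<Sum>i\<in>F. (cmod (x i))\<^sup>2) \<le> 1 \<and> (\<Sum>i\<in>F. (cmod (y i))\<^sup>2) \<le> 1}"

definition mbounded :: "mat \<Rightarrow> bool" where
  "mbounded M \<longleftrightarrow> bdd_above (form_vals M)"

definition opnorm :: "mat \<Rightarrow> real" where
  "opnorm M = Sup (form_vals M)"

definition shiftU :: mat where
  "shiftU = (\<lambda>i j. if i = j + 1 then 1 else 0)"

definition diagK :: "(int \<Rightarrow> complex) \<Rightarrow> mat" where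
  "diagK a = (\<lambda>i j. if i = j then a i else 0)"

definition cZ :: "(int \<Rightarrow> complex) set" where
  "cZ = {a. (\<exists>l. (a \<longlongrightarrow> l) at_top) \<and> (\<exists>l. (a \<longlongrightarrow> l) at_bot)}"

inductive_set cstar_gen :: "mat set \<Rightarrow> mat set" for G :: "mat set" where
  gen: "M \<in> G \<Longrightarrow> M \<in> cstar_gen G"
| add: "M \<in> cstar_gen G \<Longrightarrow> N \<in> cstar_gen G \<Longrightarrow> mat_add M N \<in> cstar_gen G"
| scale: "M \<in> cstar_gen G \<Longrightarrow> mat_scale c M \<in> cstar_gen G"
| mult: "M \<in> cstar_gen G \<Longrightarrow> N \<in> cstar_gen G \<Longrightarrow> mat_mult M N \<in> cstar_gen G"
| adj: "M \<in> cstar_gen G \<Longrightarrow> mat_adj M \<in> cstar_gen G"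
| lim: "(\<And>n. X n \<in> cstar_gen G) \<Longrightarrow> mbounded M \<Longrightarrow>
        (\<lambda>n. opnorm (mat_diff (X n) M)) \<longlonglongrightarrow> 0 \<Longrightarrow> M \<in> cstar_gen G"

definition algA :: "mat set" where
  "algA = cstar_gen ({shiftU} \<union> diagK ` cZ)"

definition HS :: "mat set" where
  "HS = {f. (\<lambda>(i, j). (cmod (f i j))\<^sup>2) summable_on UNIV}"

definition piL :: "mat \<Rightarrow> mat \<Rightarrow> mat" where
  "piL a f = mat_mult a f"

definition piR :: "mat \<Rightarrow> mat \<Rightarrow> mat" where
  "piR a f = mat_mult f a"

text \<open>Theta f = sum_n U^n f_n(-K-n), where f = sum_n U^n f_n(K), i.e. f_n(k) = f (k+n) k.
In matrix form (Theta f) i j = f (-j) (-i).\<close>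
definition Theta :: "mat \<Rightarrow> mat" where
  "Theta f = (\<lambda>i j. f (- j) (- i))"

end

theory Submission
  imports Defs
begin

text \<open>Reindexing the
summation variable k \<mapsto> -k in a matrix product shows that \<Theta> reverses products, and it is
involutive, so \<Theta> (a \<Theta> f) = f \<Theta> a holds for every a and every matrix f; hence one can take
\<theta> = \<Theta>. It remains to see that \<Theta> maps A into A. \<Theta> commutes with all *-algebra
operations and, reflecting and swapping the test vectors, preserves the values of the
sesquilinear form and thus the operator norm; so by induction over the generation of A it
suffices that \<Theta> maps U to U and a(K) to a(-K), where a(-\<cdot>) \<in> c(Z) again.\<close>

lemma infsum_int_reflect: "(\<Sum>\<^sub>\<infinity>k::int. g (- k)) = (\<Sum>\<^sub>\<infinity>k. g k)"
  by (rule infsum_reindex_bij_betw) (auto intro!: bij_betwI[of _ _ _ uminus])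

lemma Theta_Theta [simp]: "Theta (Theta M) = M"
  unfolding Theta_def by simp

lemma Theta_mult: "Theta (mat_mult M N) = mat_mult (Theta N) (Theta M)"
  unfolding Theta_def mat_mult_def
  by (intro ext, subst infsum_int_reflect [symmetric]) (simp add: mult.commute)

lemma Theta_add: "Theta (mat_add M N) = mat_add (Theta M) (Theta N)"
  unfolding Theta_def mat_add_def by simp

lemma Theta_diff: "Theta (mat_diff M N) = mat_diff (Theta M) (Theta N)"
  unfolding Theta_def mat_diff_def by simp

lemma Theta_scale: "Theta (mat_scale c M) = mat_scale c (Theta M)"
  unfolding Theta_def mat_scale_def by simp

lemma Theta_adj: "Theta (mat_adj M) = mat_adj (Theta M)"
  unfolding Theta_def mat_adj_def by simp

lemma Theta_shiftU: "Theta shiftU = shiftU"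
  unfolding Theta_def shiftU_def by (auto intro!: ext)

lemma Theta_diagK: "Theta (diagK a) = diagK (\<lambda>k. a (- k))"
  unfolding Theta_def diagK_def by (auto intro!: ext)

lemma Theta_piL_Theta: "Theta (piL a (Theta f)) = piR (Theta a) f"
  unfolding piL_def piR_def by (simp add: Theta_mult)

lemma form_vals_Theta_subset: "form_vals (Theta N) \<subseteq> form_vals N"
proof
  fix r assume "r \<in> form_vals (Theta N)"
  then obtain F x y where r: "r = cmod (\<Sum>i\<in>F. \<Sum>j\<in>F. cnj (y i) * Theta N i j * x j)"
    and F: "finite F" and x: "(\<Sum>i\<in>F. (cmod (x i))\<^sup>2) \<le> 1" and y: "(\<Sum>i\<in>F. (cmod (y i))\<^sup>2) \<le> 1"
    unfolding form_vals_def by blast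
  define F' where "F' = uminus ` F"
  define x' where "x' = (\<lambda>j. cnj (y (- j)))"
  define y' where "y' = (\<lambda>i. cnj (x (- i)))"
  have inj: "inj_on (uminus :: int \<Rightarrow> int) F" by simp
  have x': "(\<Sum>i\<in>F'. (cmod (x' i))\<^sup>2) \<le> 1"
    using y unfolding F'_def x'_def by (simp add: sum.reindex [OF inj] o_def)
  have y': "(\<Sum>i\<in>F'. (cmod (y' i))\<^sup>2) \<le> 1"
    using x unfolding F'_def y'_def by (simp add: sum.reindex [OF inj] o_def)
  have "(\<Sum>i\<in>F'. \<Sum>j\<in>F'. cnj (y' i) * N i j * x' j)
      = (\<Sum>a\<in>F. \<Sum>b\<in>F. x a * N (- a) (- b) * cnj (y b))"
    unfolding F'_def x'_def y'_def by (simp add: sum.reindex [OF inj] o_def)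
  also have "\<dots> = (\<Sum>b\<in>F. \<Sum>a\<in>F. x a * N (- a) (- b) * cnj (y b))"
    by (rule sum.swap)
  also have "\<dots> = (\<Sum>i\<in>F. \<Sum>j\<in>F. cnj (y i) * Theta N i j * x j)"
    unfolding Theta_def by (intro sum.cong refl) (simp add: mult_ac)
  finally have "r = cmod (\<Sum>i\<in>F'. \<Sum>j\<in>F'. cnj (y' i) * N i j * x' j)"
    using r by simp
  moreover have "finite F'"
    using F unfolding F'_def by simp
  ultimately show "r \<in> form_vals N"
    unfolding form_vals_def using x' y' by blast
qed

lemma form_vals_Theta [simp]: "form_vals (Theta N) = form_vals N"
  using form_vals_Theta_subset [of N] form_vals_Theta_subset [of "Theta N"] by simp

lemma mbounded_Theta: "mbounded (Theta M) \<longleftrightarrow> mbounded M"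
  unfolding mbounded_def by simp

lemma opnorm_Theta: "opnorm (Theta M) = opnorm M"
  unfolding opnorm_def by simp

lemma Theta_cstar_gen:
  assumes "M \<in> cstar_gen G" and "\<And>g. g \<in> G \<Longrightarrow> Theta g \<in> cstar_gen G"
  shows "Theta M \<in> cstar_gen G"
  using assms(1)
proof (induction rule: cstar_gen.induct)
  case (gen M)
  then show ?case by (rule assms(2))
next
  case (add M N)
  then show ?case by (simp add: Theta_add cstar_gen.add)
next
  case (scale M c)
  then show ?case by (simp add: Theta_scale cstar_gen.scale)
next
  case (mult M N)
  then show ?case by (simp add: Theta_mult cstar_gen.mult)
next
  case (adj M)
  then show ?case by (simp add: Theta_adj cstar_gen.adj)
next
  case (lim X M)
  show ?case
  proof (rule cstar_gen.lim [of "\<lambda>n. Theta (X n)"])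
    show "Theta (X n) \<in> cstar_gen G" for n
      using lim.IH .
    show "mbounded (Theta M)"
      using lim.hyps(2) by (simp add: mbounded_Theta)
    show "(\<lambda>n. opnorm (mat_diff (Theta (X n)) (Theta M))) \<longlonglongrightarrow> 0"
      using lim.hyps(3) by (simp add: opnorm_Theta flip: Theta_diff)
  qed
qed

lemma tendsto_at_top_reflect_int: "((\<lambda>k::int. a (- k)) \<longlongrightarrow> l) at_top \<longleftrightarrow> (a \<longlongrightarrow> l) at_bot"
  unfolding filterlim_def at_bot_mirror filtermap_filtermap by simp

lemma tendsto_at_bot_reflect_int: "((\<lambda>k::int. a (- k)) \<longlongrightarrow> l) at_bot \<longleftrightarrow> (a \<longlongrightarrow> l) at_top"
  unfolding filterlim_def at_top_mirror filtermap_filtermap by simp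

lemma cZ_reflect: "a \<in> cZ \<Longrightarrow> (\<lambda>k. a (- k)) \<in> cZ"
  unfolding cZ_def by (simp add: tendsto_at_top_reflect_int tendsto_at_bot_reflect_int)

lemma Theta_algA: "x \<in> algA \<Longrightarrow> Theta x \<in> algA"
  unfolding algA_def
  by (erule Theta_cstar_gen)
    (auto simp: Theta_shiftU Theta_diagK intro!: cstar_gen.gen cZ_reflect)

theorem mainTheorem6:
  shows "(\<forall>f\<in>HS. Theta (piL shiftU (Theta f)) = piR shiftU f)
    \<and> (\<forall>a\<in>cZ. \<forall>f\<in>HS. Theta (piL (diagK a) (Theta f)) = piR (diagK (\<lambda>k. a (- k))) f)
    \<and> (\<exists>\<theta> :: mat \<Rightarrow> mat.
          (\<forall>x\<in>algA. \<theta> x \<in> algA)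
        \<and> (\<forall>x\<in>algA. \<forall>y\<in>algA. \<theta> (mat_add x y) = mat_add (\<theta> x) (\<theta> y))
        \<and> (\<forall>x\<in>algA. \<forall>c. \<theta> (mat_scale c x) = mat_scale c (\<theta> x))
        \<and> (\<forall>x\<in>algA. \<forall>y\<in>algA. \<theta> (mat_mult x y) = mat_mult (\<theta> y) (\<theta> x))
        \<and> \<theta> shiftU = shiftU
        \<and> (\<forall>a\<in>cZ. \<theta> (diagK a) = diagK (\<lambda>k. a (- k)))
        \<and> (\<forall>x\<in>algA. \<forall>f\<in>HS. Theta (piL x (Theta f)) = piR (\<theta> x) f))"
  by (intro conjI exI [of _ Theta])
    (auto simp: Theta_piL_Theta Theta_shiftU Theta_diagK Theta_add Theta_scale Theta_mult
      Theta_algA)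

end
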